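(* Let $\langle X,d\rangle$ be a metric space with completion $\langle\widehat{X},\widehat{d}\rangle$. The following are equivalent: (1) $\widehat{X}$ is cofinally Bourbaki quasi-complete; (2) every Cauchy-continuous function $f$ from $X$ to any metric space $\langle Y,\rho\rangle$ maps every cofinally Bourbaki quasi-Cauchy sequence in $X$ to a sequence in $Y$ that has a Cauchy subsequence; (3) every Cauchy-continuous function from $X$ to any metric space $\langle Y,\rho\rangle$ maps every cofinally Bourbaki quasi-Cauchy sequence in $X$ to a cofinally Cauchy sequence in $Y$; (4) every Cauchy-continuous function from $X$ to any metric space $\langle Y,\rho\rangle$ maps every cofinally Bourbaki quasi-Cauchy sequence in $X$ to a cofinally Bourbaki-Cauchy sequence in $Y$; (5) every real-valued Cauchy-continuous function on $X$ maps every cofinally Bourbaki quasi-Cauchy sequence in $X$ to a cofinally Bourbaki-Cauchy sequence in $\mathbb{R}$; (6) every cofinally Bourbaki quasi-Cauchy sequence in $X$ has a Cauchy subsequence.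
   Context: A function is Cauchy-continuous if it maps Cauchy sequences to Cauchy sequences. For $\varepsilon>0$, an $\varepsilon$-chain joining $x,y$ is a finite sequence $x=x_0,\dots,x_n=y$ with consecutive distances $<\varepsilon$. A sequence $\langle x_n\rangle$ in a metric space is cofinally Bourbaki quasi-Cauchy if for every $\varepsilon>0$ there is an infinite $N_\varepsilon\subseteq\mathbb{N}$ such that any $x_j,x_k$ with $j,k\in N_\varepsilon$ can be joined by an $\varepsilon$-chain (in that space); a metric space is cofinally Bourbaki quasi-complete if every such sequence has a cluster point. A sequence $\langle y_n\rangle$ in $\langle Y,\rho\rangle$ is cofinally Cauchy if for every $\varepsilon>0$ there is an infinite $N_\varepsilon\subseteq\mathbb{N}$ with $\rho(y_n,y_m)<\varepsilon$ for $n,m\in N_\varepsilon$. With $S^1_\rho(p,\varepsilon)$ the open $\varepsilon$-ball about $p$ and $S^{m}_\rho(p,\varepsilon)=\{y:\rho(y,S^{m-1}_\rho(p,\varepsilon))<\varepsilon\}$, $\langle y_n\rangle$ is cofinally Bourbaki-Cauchy if for every $\varepsilon>0$ there exist an infinite $N_\varepsilon\subseteq\mathbb{N}$, $m\in\mathbb{N}$, $p\in Y$ with $y_n\in S^m_\rho(p,\varepsilon)$ for all $n\in N_\varepsilon$. *)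

theory Defs
  imports "HOL-Analysis.Analysis"
begin

definition eps_chain :: "'a metric \<Rightarrow> real \<Rightarrow> 'a \<Rightarrow> 'a \<Rightarrow> bool" where
  "eps_chain m e x y \<longleftrightarrow>
     (\<exists>(n::nat) (p::nat \<Rightarrow> 'a). p 0 = x \<and> p n = y \<and> (\<forall>i\<le>n. p i \<in> mspace m) \<and>
        (\<forall>i<n. mdist m (p i) (p (Suc i)) < e))"

definition cofinally_Bourbaki_quasi_Cauchy :: "'a metric \<Rightarrow> (nat \<Rightarrow> 'a) \<Rightarrow> bool" where
  "cofinally_Bourbaki_quasi_Cauchy m x \<longleftrightarrow> range x \<subseteq> mspace m \<and>
     (\<forall>e>0. \<exists>N::nat set. infinite N \<and> (\<forall>j\<in>N. \<forall>k\<in>N. eps_chain m e (x j) (x k)))"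

definition cluster_point :: "'a metric \<Rightarrow> (nat \<Rightarrow> 'a) \<Rightarrow> 'a \<Rightarrow> bool" where
  "cluster_point m x p \<longleftrightarrow> p \<in> mspace m \<and>
     (\<forall>e>0. \<forall>n. \<exists>k\<ge>n. mdist m (x k) p < e)"

definition cofinally_Bourbaki_quasi_complete :: "'a metric \<Rightarrow> bool" where
  "cofinally_Bourbaki_quasi_complete m \<longleftrightarrow>
     (\<forall>x. cofinally_Bourbaki_quasi_Cauchy m x \<longrightarrow> (\<exists>p. cluster_point m x p))"

definition cofinally_Cauchy :: "'a metric \<Rightarrow> (nat \<Rightarrow> 'a) \<Rightarrow> bool" where
  "cofinally_Cauchy m y \<longleftrightarrow> range y \<subseteq> mspace m \<and>
     (\<forall>e>0. \<exists>N::nat set. infinite N \<and> (\<forall>n\<in>N. \<forall>k\<in>N. mdist m (y n) (y k) < e))"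

text \<open>Iterated balls: S 0 = {p}, S 1 = open e-ball about p,
  S (m+1) = points at distance < e from S m (distance to a set is < e iff
  some point of the set is at distance < e).\<close>
primrec iter_ball :: "'a metric \<Rightarrow> 'a \<Rightarrow> real \<Rightarrow> nat \<Rightarrow> 'a set" where
  "iter_ball m p e 0 = {p} \<inter> mspace m"
| "iter_ball m p e (Suc k) = {y \<in> mspace m. \<exists>z \<in> iter_ball m p e k. mdist m y z < e}"

definition cofinally_Bourbaki_Cauchy :: "'a metric \<Rightarrow> (nat \<Rightarrow> 'a) \<Rightarrow> bool" where
  "cofinally_Bourbaki_Cauchy m y \<longleftrightarrow> range y \<subseteq> mspace m \<and>
     (\<forall>e>0. \<exists>(N::nat set) (k::nat) p. infinite N \<and> k \<ge> 1 \<and> p \<in> mspace m \<and>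
        (\<forall>n\<in>N. y n \<in> iter_ball m p e k))"

definition has_Cauchy_subsequence :: "'a metric \<Rightarrow> (nat \<Rightarrow> 'a) \<Rightarrow> bool" where
  "has_Cauchy_subsequence m y \<longleftrightarrow>
     (\<exists>r. strict_mono r \<and> Metric_space.MCauchy (mspace m) (mdist m) (y \<circ> r))"

definition is_completion :: "'a metric \<Rightarrow> 'c metric \<Rightarrow> ('a \<Rightarrow> 'c) \<Rightarrow> bool" where
  "is_completion X Xh emb \<longleftrightarrow> mcomplete_of Xh \<and> emb ` mspace X \<subseteq> mspace Xh \<and>
     (\<forall>x\<in>mspace X. \<forall>y\<in>mspace X. mdist Xh (emb x) (emb y) = mdist X x y) \<and>
     mtopology_of Xh closure_of (emb ` mspace X) = mspace Xh"

text \<open>Conditions (2)-(4) for target spaces whose points have type 'b.\<close>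
definition cond2 :: "'a metric \<Rightarrow> 'b itself \<Rightarrow> bool" where
  "cond2 X (_::'b itself) \<longleftrightarrow> (\<forall>(Y::'b metric) f x. Cauchy_continuous_map X Y f \<longrightarrow>
     cofinally_Bourbaki_quasi_Cauchy X x \<longrightarrow> has_Cauchy_subsequence Y (f \<circ> x))"

definition cond3 :: "'a metric \<Rightarrow> 'b itself \<Rightarrow> bool" where
  "cond3 X (_::'b itself) \<longleftrightarrow> (\<forall>(Y::'b metric) f x. Cauchy_continuous_map X Y f \<longrightarrow>
     cofinally_Bourbaki_quasi_Cauchy X x \<longrightarrow> cofinally_Cauchy Y (f \<circ> x))"

definition cond4 :: "'a metric \<Rightarrow> 'b itself \<Rightarrow> bool" where
  "cond4 X (_::'b itself) \<longleftrightarrow> (\<forall>(Y::'b metric) f x. Cauchy_continuous_map X Y f \<longrightarrow>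
     cofinally_Bourbaki_quasi_Cauchy X x \<longrightarrow> cofinally_Bourbaki_Cauchy Y (f \<circ> x))"

definition cond5 :: "'a metric \<Rightarrow> bool" where
  "cond5 X \<longleftrightarrow> (\<forall>(f::'a \<Rightarrow> real) x. Cauchy_continuous_map X euclidean_metric f \<longrightarrow>
     cofinally_Bourbaki_quasi_Cauchy X x \<longrightarrow> cofinally_Bourbaki_Cauchy euclidean_metric (f \<circ> x))"

definition cond6 :: "'a metric \<Rightarrow> bool" where
  "cond6 X \<longleftrightarrow> (\<forall>x. cofinally_Bourbaki_quasi_Cauchy X x \<longrightarrow> has_Cauchy_subsequence X x)"

end

theory Submission
  imports Defs
begin

text \<open>
  (1) \<open>\<Rightarrow>\<close> (6): a cofinally Bourbaki quasi-Cauchy sequence of \<open>X\<close> stays one in the completion,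
  so it has a cluster point there; a subsequence converging to it is Cauchy, also in \<open>X\<close>.
  (6) \<open>\<Rightarrow>\<close> (2) \<open>\<Rightarrow>\<close> (3) \<open>\<Rightarrow>\<close> (4) \<open>\<Rightarrow>\<close> (5) hold because Cauchy-continuous maps preserve
  Cauchy subsequences.
  (5) \<open>\<Rightarrow>\<close> (1): let \<open>w\<close> be cofinally Bourbaki quasi-Cauchy in the completion without cluster
  point. Tents of height \<open>n\<close> and radius \<open>1/(n+1)\<close> around \<open>w n\<close> are then locally finite, so
  their sum is continuous on the complete space, hence Cauchy-continuous. A sequence of \<open>X\<close>
  shadowing \<open>w\<close> is again cofinally Bourbaki quasi-Cauchy, but the sum grows like \<open>n/2\<close> along
  it, whereas a cofinally Bourbaki-Cauchy real sequence is bounded on an infinite set.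
\<close>

definition isometric_embedding :: "'a metric \<Rightarrow> 'b metric \<Rightarrow> ('a \<Rightarrow> 'b) \<Rightarrow> bool" where
  "isometric_embedding X Y f \<longleftrightarrow> f ` mspace X \<subseteq> mspace Y \<and>
     (\<forall>x\<in>mspace X. \<forall>y\<in>mspace X. mdist Y (f x) (f y) = mdist X x y)"

lemma is_completion_isometric_embedding:
  "is_completion X Xh emb \<Longrightarrow> isometric_embedding X Xh emb"
  by (simp add: is_completion_def isometric_embedding_def)

lemma isometric_embedding_MCauchy_iff:
  assumes "isometric_embedding X Y f" "range x \<subseteq> mspace X"
  shows "Metric_space.MCauchy (mspace Y) (mdist Y) (f \<circ> x) \<longleftrightarrow>
         Metric_space.MCauchy (mspace X) (mdist X) x"
  using assms
  by (auto simp: isometric_embedding_def Metric_space.MCauchy_def[OF Metric_space_mspace_mdist]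
                 image_subset_iff)

lemma isometric_embedding_Cauchy_continuous_map:
  "isometric_embedding X Y f \<Longrightarrow> Cauchy_continuous_map X Y f"
  unfolding Cauchy_continuous_map_def
proof (intro allI impI)
  fix x assume "isometric_embedding X Y f" and x: "Metric_space.MCauchy (mspace X) (mdist X) x"
  moreover have "range x \<subseteq> mspace X"
    using x by (simp add: Metric_space.MCauchy_def[OF Metric_space_mspace_mdist])
  ultimately show "Metric_space.MCauchy (mspace Y) (mdist Y) (f \<circ> x)"
    by (simp add: isometric_embedding_MCauchy_iff)
qed

lemma isometric_embedding_eps_chain:
  assumes f: "isometric_embedding X Y f" and "eps_chain X e a b"
  shows "eps_chain Y e (f a) (f b)"
proof -
  obtain n p where "p 0 = a" "p n = b" "\<forall>i\<le>n. p i \<in> mspace X"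
      "\<forall>i<n. mdist X (p i) (p (Suc i)) < e"
    using assms(2) unfolding eps_chain_def by blast
  with f show ?thesis
    unfolding eps_chain_def isometric_embedding_def
    by (intro exI[of _ n] exI[of _ "f \<circ> p"]) auto
qed

lemma isometric_embedding_cofinally_Bourbaki_quasi_Cauchy:
  assumes f: "isometric_embedding X Y f" and x: "cofinally_Bourbaki_quasi_Cauchy X x"
  shows "cofinally_Bourbaki_quasi_Cauchy Y (f \<circ> x)"
  unfolding cofinally_Bourbaki_quasi_Cauchy_def
proof (intro conjI allI impI)
  show "range (f \<circ> x) \<subseteq> mspace Y"
    using f x by (auto simp: isometric_embedding_def cofinally_Bourbaki_quasi_Cauchy_def image_subset_iff)
  fix e :: real assume "e > 0"
  then obtain N where "infinite N" "\<forall>j\<in>N. \<forall>k\<in>N. eps_chain X e (x j) (x k)"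
    using x unfolding cofinally_Bourbaki_quasi_Cauchy_def by blast
  then show "\<exists>N. infinite N \<and> (\<forall>j\<in>N. \<forall>k\<in>N. eps_chain Y e ((f \<circ> x) j) ((f \<circ> x) k))"
    using isometric_embedding_eps_chain[OF f] by auto
qed

lemma dense_in_mspace_approx:
  assumes "mtopology_of m closure_of S = mspace m" "p \<in> mspace m" "e > 0"
  obtains s where "s \<in> S" "mdist m s p < e"
proof -
  have "p \<in> Metric_space.mtopology (mspace m) (mdist m) closure_of S"
    using assms(1,2) by (simp add: mtopology_of_def)
  then obtain s where "s \<in> S" "s \<in> mball_of m p e"
    using assms(3) by (auto simp: Metric_space.metric_closure_of[OF Metric_space_mspace_mdist]
        mball_of_def)
  then show ?thesis
    using that by (simp add: mdist_commute)
qed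

lemma isometric_embedding_mdist_le:
  assumes f: "isometric_embedding X Y f"
    and "u \<in> mspace X" "v \<in> mspace X" "s \<in> mspace Y" "t \<in> mspace Y"
  shows "mdist X u v \<le> mdist Y (f u) s + mdist Y s t + mdist Y t (f v)"
proof -
  have fu: "f u \<in> mspace Y" and fv: "f v \<in> mspace Y"
    using f assms(2,3) by (auto simp: isometric_embedding_def)
  have "mdist X u v = mdist Y (f u) (f v)"
    using f assms(2,3) by (simp add: isometric_embedding_def)
  also have "\<dots> \<le> mdist Y (f u) s + mdist Y s (f v)"
    using mdist_triangle[OF fu assms(4) fv] .
  also have "\<dots> \<le> mdist Y (f u) s + (mdist Y s t + mdist Y t (f v))"
    using mdist_triangle[OF assms(4,5) fv] by simp
  finally show ?thesis by simp
qed

lemma dense_image_shadow: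
  assumes dense: "mtopology_of Y closure_of (f ` S) = mspace Y"
    and c: "\<forall>i\<le>n. c i \<in> mspace Y" and a: "a \<in> S" "mdist Y (f a) (c 0) < \<delta>"
  obtains A where "A 0 = a" "\<forall>i\<le>n. A i \<in> S \<and> mdist Y (f (A i)) (c i) < \<delta>"
proof -
  have "\<delta> > 0"
    using a(2) by (smt (verit) mdist_nonneg)
  have "\<exists>s\<in>S. mdist Y (f s) (c i) < \<delta>" if "i \<le> n" for i
    using c that \<open>\<delta> > 0\<close> by (metis dense_in_mspace_approx[OF dense] imageE)
  then obtain A where "\<forall>i\<le>n. A i \<in> S \<and> mdist Y (f (A i)) (c i) < \<delta>"
    by metis
  then show ?thesis
    using that[of "A(0 := a)"] a by simp
qed

text \<open>The final step from the shadow of \<open>q\<close> to \<open>b\<close> makes the new chain one step longer.\<close>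
lemma dense_isometric_embedding_eps_chain:
  assumes f: "isometric_embedding X Y f"
    and dense: "mtopology_of Y closure_of (f ` mspace X) = mspace Y"
    and chain: "eps_chain Y e p q" and "e > 0"
    and a: "a \<in> mspace X" "mdist Y (f a) p < \<delta>"
    and b: "b \<in> mspace X" "mdist Y (f b) q < \<delta>"
  shows "eps_chain X (e + 2 * \<delta>) a b"
proof -
  obtain n c where c: "c 0 = p" "c n = q" "\<forall>i\<le>n. c i \<in> mspace Y"
      "\<forall>i<n. mdist Y (c i) (c (Suc i)) < e"
    using chain unfolding eps_chain_def by blast
  obtain A where A: "A 0 = a" "\<forall>i\<le>n. A i \<in> mspace X \<and> mdist Y (f (A i)) (c i) < \<delta>"
    using dense_image_shadow[OF dense c(3) a(1)] a(2) c(1) by metis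
  define B where "B i = (if i \<le> n then A i else b)" for i
  have B: "B i \<in> mspace X" for i
    using A(2) b(1) by (simp add: B_def)
  have near: "mdist Y (f (B i)) (c i) < \<delta>" if "i \<le> n" for i
    using that A(2) by (simp add: B_def)
  have "mdist X (B i) (B (Suc i)) < e + 2 * \<delta>" if "i < Suc n" for i
  proof (cases "i < n")
    case True
    have "mdist X (B i) (B (Suc i))
        \<le> mdist Y (f (B i)) (c i) + mdist Y (c i) (c (Suc i)) + mdist Y (c (Suc i)) (f (B (Suc i)))"
      using isometric_embedding_mdist_le[OF f B B] c(3) True by simp
    moreover have "mdist Y (c (Suc i)) (f (B (Suc i))) < \<delta>"
      using near[of "Suc i"] True by (simp add: mdist_commute)
    moreover have "mdist Y (c i) (c (Suc i)) < e"
      using c(4) True by blast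
    ultimately show ?thesis
      using near[of i] True by (simp add: mdist_commute)
  next
    case False
    then have "i = n" "B (Suc i) = b"
      using that by (auto simp: B_def)
    moreover have "c n \<in> mspace Y"
      using c(3) by simp
    then have "mdist X (B n) b \<le> mdist Y (f (B n)) (c n) + mdist Y (c n) (f b)"
      using isometric_embedding_mdist_le[OF f B b(1), of "c n" "c n" n]
      by (simp add: Metric_space.mdist_zero[OF Metric_space_mspace_mdist])
    ultimately show ?thesis
      using near[of n] b(2) c(2) \<open>e > 0\<close> by (simp add: mdist_commute)
  qed
  then show ?thesis
    unfolding eps_chain_def using A(1) B by (intro exI[of _ "Suc n"] exI[of _ B]) (simp add: B_def)
qed

lemma dense_isometric_embedding_cofinally_Bourbaki_quasi_Cauchy:
  assumes f: "isometric_embedding X Y f"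
    and dense: "mtopology_of Y closure_of (f ` mspace X) = mspace Y"
    and w: "cofinally_Bourbaki_quasi_Cauchy Y w" and x: "range x \<subseteq> mspace X"
    and approx: "(\<lambda>n. mdist Y (f (x n)) (w n)) \<longlonglongrightarrow> 0"
  shows "cofinally_Bourbaki_quasi_Cauchy X x"
  unfolding cofinally_Bourbaki_quasi_Cauchy_def
proof (intro conjI allI impI)
  show "range x \<subseteq> mspace X" by (fact x)
  fix e :: real assume "e > 0"
  then obtain N where N: "infinite N" "\<forall>j\<in>N. \<forall>k\<in>N. eps_chain Y (e/3) (w j) (w k)"
    using w unfolding cofinally_Bourbaki_quasi_Cauchy_def by (meson divide_pos_pos zero_less_numeral)
  obtain n0 where n0: "\<And>n. n \<ge> n0 \<Longrightarrow> mdist Y (f (x n)) (w n) < e/3"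
    using order_tendstoD(2)[OF approx, of "e/3"] \<open>e > 0\<close> by (auto simp: eventually_sequentially)
  have "eps_chain X e (x j) (x k)" if "j \<in> N - {..<n0}" "k \<in> N - {..<n0}" for j k
  proof -
    have "eps_chain X (e/3 + 2 * (e/3)) (x j) (x k)"
      using that N(2) n0 x \<open>e > 0\<close>
      by (intro dense_isometric_embedding_eps_chain[OF f dense, where p = "w j" and q = "w k"])
        auto
    then show ?thesis by simp
  qed
  moreover have "infinite (N - {..<n0})"
    using N(1) by simp
  ultimately show "\<exists>N. infinite N \<and> (\<forall>j\<in>N. \<forall>k\<in>N. eps_chain X e (x j) (x k))"
    by blast
qed

lemma cluster_point_imp_has_Cauchy_subsequence:
  assumes x: "range x \<subseteq> mspace m" and "cluster_point m x p"
  shows "has_Cauchy_subsequence m x"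
proof -
  have p: "p \<in> mspace m" and frequently_near: "\<And>e n. e > 0 \<Longrightarrow> \<exists>k\<ge>n. mdist m (x k) p < e"
    using assms(2) unfolding cluster_point_def by auto
  obtain r where r: "\<And>n. mdist m (x (r n)) p < inverse (real (Suc n))" "\<And>n. r n < r (Suc n)"
  proof -
    have "\<exists>r. \<forall>n. mdist m (x (r n)) p < inverse (real (Suc n)) \<and> r n < r (Suc n)"
    proof (rule dependent_nat_choice)
      show "\<exists>k. mdist m (x k) p < inverse (real (Suc 0))"
        using frequently_near[of 1 0] by auto
      show "\<exists>k'. mdist m (x k') p < inverse (real (Suc (Suc n))) \<and> k < k'" for k n
        using frequently_near[of "inverse (real (Suc (Suc n)))" "Suc k"] by (auto simp: Suc_le_eq)
    qed
    then show ?thesis using that by blast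
  qed
  have "(\<lambda>n. mdist m (x (r n)) p) \<longlonglongrightarrow> 0"
  proof (rule tendsto_sandwich[OF _ _ tendsto_const LIMSEQ_inverse_real_of_nat])
    show "\<forall>\<^sub>F n in sequentially. mdist m (x (r n)) p \<le> inverse (real (Suc n))"
      using r(1) by (intro always_eventually allI less_imp_le)
  qed simp
  then have "limitin (mtopology_of m) (x \<circ> r) p sequentially"
    using p x by (auto simp: mtopology_of_def image_subset_iff
        Metric_space.limitin_metric_dist_null[OF Metric_space_mspace_mdist])
  then have "Metric_space.MCauchy (mspace m) (mdist m) (x \<circ> r)"
    using x by (intro Metric_space.convergent_imp_MCauchy) (auto simp: mtopology_of_def)
  moreover have "strict_mono r"
    using r(2) by (simp add: strict_mono_Suc_iff)
  ultimately show ?thesis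
    unfolding has_Cauchy_subsequence_def by blast
qed

lemma isometric_embedding_has_Cauchy_subsequence_iff:
  assumes "isometric_embedding X Y f" "range x \<subseteq> mspace X"
  shows "has_Cauchy_subsequence Y (f \<circ> x) \<longleftrightarrow> has_Cauchy_subsequence X x"
proof -
  have "Metric_space.MCauchy (mspace Y) (mdist Y) (f \<circ> (x \<circ> r)) \<longleftrightarrow>
        Metric_space.MCauchy (mspace X) (mdist X) (x \<circ> r)" for r
    using assms(2) by (intro isometric_embedding_MCauchy_iff[OF assms(1)]) auto
  then show ?thesis
    by (simp add: has_Cauchy_subsequence_def comp_assoc)
qed

lemma Cauchy_continuous_map_has_Cauchy_subsequence:
  assumes "Cauchy_continuous_map X Y f" "has_Cauchy_subsequence X x"
  shows "has_Cauchy_subsequence Y (f \<circ> x)"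
  using assms unfolding has_Cauchy_subsequence_def Cauchy_continuous_map_def
  by (metis comp_assoc)

lemma has_Cauchy_subsequence_imp_cofinally_Cauchy:
  assumes y: "range y \<subseteq> mspace m" and "has_Cauchy_subsequence m y"
  shows "cofinally_Cauchy m y"
  unfolding cofinally_Cauchy_def
proof (intro conjI allI impI)
  show "range y \<subseteq> mspace m" by (fact y)
  obtain r where r: "strict_mono r" "Metric_space.MCauchy (mspace m) (mdist m) (y \<circ> r)"
    using assms(2) unfolding has_Cauchy_subsequence_def by blast
  fix e :: real assume "e > 0"
  then obtain n0 where n0: "\<forall>n n'. n0 \<le> n \<longrightarrow> n0 \<le> n' \<longrightarrow> mdist m (y (r n)) (y (r n')) < e"
    using r(2) unfolding Metric_space.MCauchy_def[OF Metric_space_mspace_mdist] comp_apply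
    by blast
  have "infinite (r ` {n0..})"
    using r(1) infinite_Ici[of n0]
    by (simp add: finite_image_iff strict_mono_imp_inj_on inj_on_subset)
  moreover have "\<forall>n\<in>r ` {n0..}. \<forall>k\<in>r ` {n0..}. mdist m (y n) (y k) < e"
    using n0 by auto
  ultimately show "\<exists>N. infinite N \<and> (\<forall>n\<in>N. \<forall>k\<in>N. mdist m (y n) (y k) < e)"
    by blast
qed

lemma cofinally_Cauchy_imp_cofinally_Bourbaki_Cauchy:
  assumes "cofinally_Cauchy m y"
  shows "cofinally_Bourbaki_Cauchy m y"
  unfolding cofinally_Bourbaki_Cauchy_def
proof (intro conjI allI impI)
  show y: "range y \<subseteq> mspace m"
    using assms unfolding cofinally_Cauchy_def by blast
  fix e :: real assume "e > 0"
  then obtain N where N: "infinite N" "\<forall>n\<in>N. \<forall>k\<in>N. mdist m (y n) (y k) < e"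
    using assms unfolding cofinally_Cauchy_def by blast
  then obtain n0 where "n0 \<in> N"
    by (metis finite.emptyI ex_in_conv)
  then have "\<forall>n\<in>N. y n \<in> iter_ball m (y n0) e 1"
    using N(2) y by auto
  then show "\<exists>N k p. infinite N \<and> 1 \<le> k \<and> p \<in> mspace m \<and> (\<forall>n\<in>N. y n \<in> iter_ball m p e k)"
    using N(1) y by blast
qed

lemma iter_ball_subset_mcball:
  assumes "p \<in> mspace m" "e \<ge> 0"
  shows "iter_ball m p e k \<subseteq> mcball_of m p (real k * e)"
proof (induction k)
  case 0
  then show ?case
    using assms(1) by (auto simp: Metric_space.mdist_zero[OF Metric_space_mspace_mdist])
next
  case (Suc k)
  show ?case
  proof
    fix y assume "y \<in> iter_ball m p e (Suc k)"
    then obtain z where y: "y \<in> mspace m" and z: "z \<in> iter_ball m p e k" "mdist m y z < e"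
      by auto
    have "mdist m p z \<le> real k * e" "z \<in> mspace m"
      using Suc.IH z(1) by auto
    then have "mdist m p y \<le> real k * e + e"
      using mdist_triangle[OF assms(1) \<open>z \<in> mspace m\<close> y] z(2) by (simp add: mdist_commute)
    then show "y \<in> mcball_of m p (real (Suc k) * e)"
      using assms(1) y by (simp add: algebra_simps)
  qed
qed

lemma cofinally_Bourbaki_Cauchy_imp_infinitely_often_bounded:
  assumes "cofinally_Bourbaki_Cauchy m y"
  shows "\<exists>p r. infinite {n. y n \<in> mcball_of m p r}"
proof -
  obtain N k p where "infinite N" "p \<in> mspace m" "\<forall>n\<in>N. y n \<in> iter_ball m p 1 k"
    using assms unfolding cofinally_Bourbaki_Cauchy_def by (meson zero_less_one)
  then have "infinite {n. y n \<in> mcball_of m p (real k)}"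
    using iter_ball_subset_mcball[of p m 1 k]
    by (auto elim!: infinite_super[rotated])
  then show ?thesis by blast
qed

lemma tendsto_at_top_not_cofinally_Bourbaki_Cauchy:
  fixes y :: "nat \<Rightarrow> real"
  assumes "filterlim y at_top sequentially"
  shows "\<not> cofinally_Bourbaki_Cauchy euclidean_metric y"
proof
  assume "cofinally_Bourbaki_Cauchy euclidean_metric y"
  then obtain p r where "infinite {n. y n \<in> mcball_of euclidean_metric p r}"
    using cofinally_Bourbaki_Cauchy_imp_infinitely_often_bounded by blast
  moreover obtain n0 where n0: "\<And>n. n \<ge> n0 \<Longrightarrow> y n > p + r"
    using assms unfolding filterlim_at_top_dense eventually_sequentially by blast
  have "{n. y n \<in> mcball_of euclidean_metric p r} \<subseteq> {..<n0}"
  proof (intro subsetI CollectI)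
    fix n assume "n \<in> {n. y n \<in> mcball_of euclidean_metric p r}"
    then have "y n \<le> p + r"
      by (simp add: dist_real_def abs_le_iff)
    then show "n \<in> {..<n0}"
      using n0 by (force simp: not_le)
  qed
  ultimately show False
    using finite_subset by blast
qed

lemma continuous_map_locally_eq:
  assumes "\<And>x. x \<in> topspace X \<Longrightarrow>
    \<exists>U g. openin X U \<and> x \<in> U \<and> continuous_map X Y g \<and> (\<forall>y\<in>U. f y = g y)"
  shows "continuous_map X Y f"
  unfolding continuous_map_atin
proof
  fix x assume "x \<in> topspace X"
  then obtain U g where U: "openin X U" "x \<in> U" and g: "continuous_map X Y g"
      and fg: "\<forall>y\<in>U. f y = g y"
    using assms by blast
  have "eventually (\<lambda>y. g y = f y) (atin X x)"
    unfolding eventually_atin using U fg by auto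
  moreover have "limitin Y g (f x) (atin X x)"
    using g \<open>x \<in> topspace X\<close> fg U(2) by (simp add: limitin_continuous_map)
  ultimately show "limitin Y f (f x) (atin X x)"
    by (rule limitin_transform_eventually)
qed

definition tent :: "'a metric \<Rightarrow> (nat \<Rightarrow> 'a) \<Rightarrow> nat \<Rightarrow> 'a \<Rightarrow> real" where
  "tent m w n p = real n * max 0 (1 - real (Suc n) * mdist m p (w n))"

definition tent_sum :: "'a metric \<Rightarrow> (nat \<Rightarrow> 'a) \<Rightarrow> 'a \<Rightarrow> real" where
  "tent_sum m w p = (\<Sum>n. tent m w n p)"

lemma tent_nonneg: "0 \<le> tent m w n p"
  by (simp add: tent_def)

lemma continuous_map_tent:
  "w n \<in> mspace m \<Longrightarrow> continuous_map (mtopology_of m) euclidean (tent m w n)"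
  unfolding tent_def by (intro continuous_intros) auto

lemma tent_eventually_zero:
  assumes w: "range w \<subseteq> mspace m" and q: "q \<in> mspace m" and "\<not> cluster_point m w q"
  obtains r M where "r > 0" "\<And>p n. p \<in> mball_of m q r \<Longrightarrow> n \<ge> M \<Longrightarrow> tent m w n p = 0"
proof -
  obtain e n0 where "e > 0" and far: "\<And>n. n \<ge> n0 \<Longrightarrow> e \<le> mdist m (w n) q"
    using assms(3) q unfolding cluster_point_def by (auto simp: not_less)
  obtain M0 :: nat where M0: "2 / e < real M0"
    using reals_Archimedean2 by blast
  have "tent m w n p = 0" if p: "p \<in> mball_of m q (e/2)" and n: "n \<ge> max n0 M0" for p n
  proof -
    have "mdist m (w n) q \<le> mdist m (w n) p + mdist m p q"
      using p w by (intro mdist_triangle) auto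
    then have "e/2 < mdist m p (w n)"
      using far[of n] n p by (simp add: mdist_commute)
    moreover have "2 / e < real (Suc n)"
      using M0 n by simp
    then have "1 < real (Suc n) * (e/2)"
      using \<open>e > 0\<close> by (simp add: field_simps)
    ultimately have "1 < real (Suc n) * mdist m p (w n)"
      by (smt (verit, best) mult_strict_left_mono of_nat_0_less_iff zero_less_Suc)
    then show ?thesis
      by (simp add: tent_def)
  qed
  then show ?thesis
    using that[of "e/2" "max n0 M0"] \<open>e > 0\<close> by simp
qed

lemma tent_sum_eq_sum:
  "(\<And>n. n \<ge> M \<Longrightarrow> tent m w n p = 0) \<Longrightarrow> tent_sum m w p = (\<Sum>n<M. tent m w n p)"
  unfolding tent_sum_def by (rule suminf_finite) auto

lemma continuous_map_tent_sum:
  assumes w: "range w \<subseteq> mspace m" and no_cluster: "\<And>q. \<not> cluster_point m w q"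
  shows "continuous_map (mtopology_of m) euclidean (tent_sum m w)"
proof (rule continuous_map_locally_eq)
  fix q assume "q \<in> topspace (mtopology_of m)"
  then have q: "q \<in> mspace m" by simp
  then obtain r M where "r > 0" "\<And>p n. p \<in> mball_of m q r \<Longrightarrow> n \<ge> M \<Longrightarrow> tent m w n p = 0"
    using tent_eventually_zero[OF w _ no_cluster] by metis
  then have "\<forall>p\<in>mball_of m q r. tent_sum m w p = (\<Sum>n<M. tent m w n p)"
    by (blast intro: tent_sum_eq_sum)
  moreover have "continuous_map (mtopology_of m) euclidean (\<lambda>p. \<Sum>n<M. tent m w n p)"
    using w by (intro continuous_map_sum continuous_map_tent) auto
  moreover have "openin (mtopology_of m) (mball_of m q r)"
    by (simp add: mtopology_of_def mball_of_def Metric_space.openin_mball[OF Metric_space_mspace_mdist])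
  ultimately show "\<exists>U g. openin (mtopology_of m) U \<and> q \<in> U \<and>
      continuous_map (mtopology_of m) euclidean g \<and> (\<forall>p\<in>U. tent_sum m w p = g p)"
    using q \<open>r > 0\<close>
    by (intro exI[of _ "mball_of m q r"] exI[of _ "\<lambda>p. \<Sum>n<M. tent m w n p"])
      (simp add: Metric_space.mdist_zero[OF Metric_space_mspace_mdist])
qed

lemma tent_sum_lower_bound:
  assumes w: "range w \<subseteq> mspace m" and no_cluster: "\<And>q. \<not> cluster_point m w q"
    and p: "p \<in> mspace m" and near: "mdist m p (w n) \<le> inverse (real (Suc n)) / 2"
  shows "real n / 2 \<le> tent_sum m w p"
proof -
  obtain r M where "r > 0" and vanish: "\<And>p' k. p' \<in> mball_of m p r \<Longrightarrow> k \<ge> M \<Longrightarrow> tent m w k p' = 0"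
    using tent_eventually_zero[OF w p no_cluster] by metis
  have "p \<in> mball_of m p r"
    using p \<open>r > 0\<close> by (simp add: Metric_space.mdist_zero[OF Metric_space_mspace_mdist])
  then have "tent_sum m w p = (\<Sum>k<max M (Suc n). tent m w k p)"
    using vanish by (intro tent_sum_eq_sum) simp
  moreover have "tent m w n p \<le> (\<Sum>k<max M (Suc n). tent m w k p)"
    by (rule member_le_sum) (auto simp: tent_nonneg)
  moreover have "1/2 \<le> 1 - real (Suc n) * mdist m p (w n)"
    using near by (simp add: field_simps)
  then have "real n * (1/2) \<le> tent m w n p"
    unfolding tent_def by (intro mult_left_mono) auto
  ultimately show ?thesis
    by linarith
qed

lemma cofinally_Bourbaki_quasi_complete_imp_cond6:
  assumes completion: "is_completion X Xh emb" and "cofinally_Bourbaki_quasi_complete Xh"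
  shows "cond6 X"
  unfolding cond6_def
proof (intro allI impI)
  fix x assume x: "cofinally_Bourbaki_quasi_Cauchy X x"
  have emb: "isometric_embedding X Xh emb"
    using completion by (rule is_completion_isometric_embedding)
  have x_in: "range x \<subseteq> mspace X"
    using x by (simp add: cofinally_Bourbaki_quasi_Cauchy_def)
  then have emb_x_in: "range (emb \<circ> x) \<subseteq> mspace Xh"
    using emb by (auto simp: isometric_embedding_def)
  have "cofinally_Bourbaki_quasi_Cauchy Xh (emb \<circ> x)"
    using emb x by (rule isometric_embedding_cofinally_Bourbaki_quasi_Cauchy)
  then obtain q where "cluster_point Xh (emb \<circ> x) q"
    using assms(2) unfolding cofinally_Bourbaki_quasi_complete_def by blast
  then have "has_Cauchy_subsequence Xh (emb \<circ> x)"
    using emb_x_in by (intro cluster_point_imp_has_Cauchy_subsequence)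
  then show "has_Cauchy_subsequence X x"
    using isometric_embedding_has_Cauchy_subsequence_iff[OF emb x_in] by simp
qed

lemma cond6_imp_cond2: "cond6 X \<Longrightarrow> cond2 X TYPE('b)"
  unfolding cond6_def cond2_def using Cauchy_continuous_map_has_Cauchy_subsequence by blast

lemma cond2_imp_cond3: "cond2 X TYPE('b) \<Longrightarrow> cond3 X TYPE('b)"
  unfolding cond2_def cond3_def
proof (intro allI impI)
  fix Y :: "'b metric" and f x
  assume "\<forall>(Y::'b metric) f x. Cauchy_continuous_map X Y f \<longrightarrow>
      cofinally_Bourbaki_quasi_Cauchy X x \<longrightarrow> has_Cauchy_subsequence Y (f \<circ> x)"
    and f: "Cauchy_continuous_map X Y f" and x: "cofinally_Bourbaki_quasi_Cauchy X x"
  then have "has_Cauchy_subsequence Y (f \<circ> x)"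
    by blast
  moreover have "range (f \<circ> x) \<subseteq> mspace Y"
    using Cauchy_continuous_map_funspace[OF f] x
    by (auto simp: cofinally_Bourbaki_quasi_Cauchy_def)
  ultimately show "cofinally_Cauchy Y (f \<circ> x)"
    by (simp add: has_Cauchy_subsequence_imp_cofinally_Cauchy)
qed

lemma cond3_imp_cond4: "cond3 X TYPE('b) \<Longrightarrow> cond4 X TYPE('b)"
  unfolding cond3_def cond4_def using cofinally_Cauchy_imp_cofinally_Bourbaki_Cauchy by blast

lemma cond4_imp_cond5: "cond4 X TYPE(real) \<Longrightarrow> cond5 X"
  unfolding cond4_def cond5_def by blast

lemma cond5_imp_cofinally_Bourbaki_quasi_complete:
  assumes completion: "is_completion X Xh emb" and "cond5 X"
  shows "cofinally_Bourbaki_quasi_complete Xh"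
proof (rule ccontr)
  assume "\<not> cofinally_Bourbaki_quasi_complete Xh"
  then obtain w where w: "cofinally_Bourbaki_quasi_Cauchy Xh w"
    and no_cluster: "\<And>q. \<not> cluster_point Xh w q"
    unfolding cofinally_Bourbaki_quasi_complete_def by blast
  have emb: "isometric_embedding X Xh emb"
    using completion by (rule is_completion_isometric_embedding)
  have complete: "Metric_space.mcomplete (mspace Xh) (mdist Xh)"
    and dense: "mtopology_of Xh closure_of (emb ` mspace X) = mspace Xh"
    using completion by (simp_all add: is_completion_def mcomplete_of_def)
  have w_in: "range w \<subseteq> mspace Xh"
    using w by (simp add: cofinally_Bourbaki_quasi_Cauchy_def)
  define f where "f = tent_sum Xh w \<circ> emb"
  have f: "Cauchy_continuous_map X euclidean_metric f"
    unfolding f_def using emb complete continuous_map_tent_sum[OF w_in no_cluster]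
    by (intro Cauchy_continuous_map_compose isometric_embedding_Cauchy_continuous_map
        continuous_imp_Cauchy_continuous_map) simp_all
  have "\<exists>a. a \<in> mspace X \<and> mdist Xh (emb a) (w n) < inverse (real (Suc n)) / 2" for n
  proof -
    have "w n \<in> mspace Xh" "inverse (real (Suc n)) / 2 > 0"
      using w_in by auto
    then obtain s where "s \<in> emb ` mspace X" "mdist Xh s (w n) < inverse (real (Suc n)) / 2"
      by (rule dense_in_mspace_approx[OF dense])
    then show ?thesis by blast
  qed
  then obtain x where x_in: "\<And>n. x n \<in> mspace X"
    and x_near: "\<And>n. mdist Xh (emb (x n)) (w n) < inverse (real (Suc n)) / 2"
    by metis
  have "(\<lambda>n. mdist Xh (emb (x n)) (w n)) \<longlonglongrightarrow> 0"
  proof (rule tendsto_sandwich[OF _ _ tendsto_const tendsto_divide_zero[OF LIMSEQ_inverse_real_of_nat]])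
    show "\<forall>\<^sub>F n in sequentially. mdist Xh (emb (x n)) (w n) \<le> inverse (real (Suc n)) / 2"
      using x_near by (intro always_eventually allI less_imp_le)
  qed simp
  then have "cofinally_Bourbaki_quasi_Cauchy X x"
    using x_in by (intro dense_isometric_embedding_cofinally_Bourbaki_quasi_Cauchy[OF emb dense w]) auto
  then have "cofinally_Bourbaki_Cauchy euclidean_metric (f \<circ> x)"
    using assms(2) f unfolding cond5_def by blast
  moreover have "filterlim (f \<circ> x) at_top sequentially"
  proof (rule filterlim_at_top_mono)
    show "filterlim (\<lambda>n. 1/2 * real n) at_top sequentially"
      by (rule filterlim_tendsto_pos_mult_at_top[OF tendsto_const _ filterlim_real_sequentially])
        simp
    have "real n / 2 \<le> (f \<circ> x) n" for n
      unfolding f_def comp_apply using emb x_in x_near[of n]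
      by (intro tent_sum_lower_bound[OF w_in no_cluster])
        (auto simp: isometric_embedding_def mdist_commute less_imp_le)
    then show "\<forall>\<^sub>F n in sequentially. 1/2 * real n \<le> (f \<circ> x) n"
      by (intro always_eventually allI) simp
  qed
  ultimately show False
    using tendsto_at_top_not_cofinally_Bourbaki_Cauchy by blast
qed

theorem mainTheorem8:
  fixes X :: "'a metric" and Xh :: "'c metric" and emb :: "'a \<Rightarrow> 'c"
  assumes "is_completion X Xh emb"
  shows "(cofinally_Bourbaki_quasi_complete Xh \<longrightarrow>
            cond2 X TYPE('b) \<and> cond3 X TYPE('b) \<and> cond4 X TYPE('b))
       \<and> (cond2 X TYPE(real) \<longrightarrow> cofinally_Bourbaki_quasi_complete Xh)
       \<and> (cond3 X TYPE(real) \<longrightarrow> cofinally_Bourbaki_quasi_complete Xh)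
       \<and> (cond4 X TYPE(real) \<longrightarrow> cofinally_Bourbaki_quasi_complete Xh)
       \<and> (cofinally_Bourbaki_quasi_complete Xh \<longleftrightarrow> cond5 X)
       \<and> (cofinally_Bourbaki_quasi_complete Xh \<longleftrightarrow> cond6 X)"
proof -
  have from1: "cond6 X" "cond2 X TYPE('d)" "cond3 X TYPE('d)" "cond4 X TYPE('d)"
    if "cofinally_Bourbaki_quasi_complete Xh" for d :: "'d itself"
    using cofinally_Bourbaki_quasi_complete_imp_cond6[OF assms that] cond6_imp_cond2 cond2_imp_cond3 cond3_imp_cond4
    by blast+
  have to1_from4: "cond4 X TYPE(real) \<Longrightarrow> cofinally_Bourbaki_quasi_complete Xh"
    using cond5_imp_cofinally_Bourbaki_quasi_complete[OF assms] cond4_imp_cond5 by blast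
  have to1_from3: "cond3 X TYPE(real) \<Longrightarrow> cofinally_Bourbaki_quasi_complete Xh"
    using to1_from4 cond3_imp_cond4 by blast
  have to1_from2: "cond2 X TYPE(real) \<Longrightarrow> cofinally_Bourbaki_quasi_complete Xh"
    using to1_from3 cond2_imp_cond3 by blast
  have to1_from6: "cond6 X \<Longrightarrow> cofinally_Bourbaki_quasi_complete Xh"
    using to1_from2 cond6_imp_cond2 by blast
  have from1_5: "cofinally_Bourbaki_quasi_complete Xh \<Longrightarrow> cond5 X"
    using from1(4) cond4_imp_cond5 by blast
  show ?thesis
    using from1 from1_5 to1_from2 to1_from3 to1_from4 to1_from6 cond5_imp_cofinally_Bourbaki_quasi_complete[OF assms]
    by blast
qed

end
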